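(* Let $\vec p,\vec s$ be $n$-tuples with entries in $[1,\infty]$, $1\le\alpha\le\infty$, with $\frac1n\sum_{i=1}^n\frac1{s_i}\le\frac1\alpha\le\frac1n\sum_{i=1}^n\frac1{p_i}$. Then there exist constants $0<c\le C$, independent of $f$ and $r$, such that for all $f\in L^1_{loc}(\mathbb R^n)$ and all $r>0$, $$c\,r^{-\sum_{i=1}^n\frac1{s_i}}\big\|\,\|f\chi_{B(\cdot,r)}\|_{L^{\vec p}}\big\|_{L^{\vec s}}\le\big\|\{\|f\chi_{Q_{r,k}}\|_{L^{\vec p}}\}_{k\in\mathbb Z^n}\big\|_{\ell^{\vec s}}\le C\,r^{-\sum_{i=1}^n\frac1{s_i}}\big\|\,\|f\chi_{B(\cdot,r)}\|_{L^{\vec p}}\big\|_{L^{\vec s}}.$$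
   Context: For $\vec p=(p_1,\dots,p_n)$ with $1\le p_i\le\infty$, $\|f\|_{L^{\vec p}}=\Big(\int_{\mathbb R}\cdots\Big(\int_{\mathbb R}|f(x)|^{p_1}\,dx_1\Big)^{p_2/p_1}\cdots dx_n\Big)^{1/p_n}$ (usual modification when some $p_i=\infty$). $B(y,r)$ is the open ball of center $y$ and radius $r$, $\chi_E$ the characteristic function of $E$; $\big\|\,\|f\chi_{B(\cdot,r)}\|_{L^{\vec p}}\big\|_{L^{\vec s}}$ is the $L^{\vec s}$-norm of $y\mapsto\|f\chi_{B(y,r)}\|_{L^{\vec p}}$. For $r>0$, $k\in\mathbb Z^n$, $Q_{r,k}=r(k+[0,1)^n)$, and for a sequence $\{a_k\}_{k\in\mathbb Z^n}$, $\|\{a_k\}\|_{\ell^{\vec s}}=\Big(\sum_{k_n\in\mathbb Z}\cdots\Big(\sum_{k_1\in\mathbb Z}|a_k|^{s_1}\Big)^{s_2/s_1}\cdots\Big)^{1/s_n}$ (usual modification for $s_i=\infty$). *)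

theory Defs
  imports "HOL-Analysis.Analysis"
begin

text \<open>Points of R^n are represented as extensional functions nat => real
  (coordinates 0..n-1, i.e. x_1..x_n), the carrier of PiM {..<n} (%_. lborel).\<close>

abbreviation Rn :: "nat \<Rightarrow> (nat \<Rightarrow> real) measure" where
  "Rn n \<equiv> PiM {..<n} (\<lambda>_. lborel)"

definition epow :: "ennreal \<Rightarrow> real \<Rightarrow> ennreal" where
  "epow x q = (if x = \<infinity> then \<infinity> else ennreal (enn2real x powr q))"

definition Lnorm1 :: "ennreal \<Rightarrow> (real \<Rightarrow> ennreal) \<Rightarrow> ennreal" where
  "Lnorm1 q h = (if q = \<infinity> then Inf {c. AE t in lborel. h t \<le> c}
     else epow (\<integral>\<^sup>+ t. epow (h t) (enn2real q) \<partial>lborel) (1 / enn2real q))"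

definition lnorm1 :: "ennreal \<Rightarrow> (int \<Rightarrow> ennreal) \<Rightarrow> ennreal" where
  "lnorm1 q a = (if q = \<infinity> then (SUP k. a k)
     else epow (\<integral>\<^sup>+ k. epow (a k) (enn2real q) \<partial>count_space UNIV) (1 / enn2real q))"

text \<open>Iterated mixed norm: mnorm k p g x takes the norms in the first k coordinates
  (coordinate 0 innermost, with exponent p 0), the other coordinates being those of x.\<close>
fun mnorm :: "nat \<Rightarrow> (nat \<Rightarrow> ennreal) \<Rightarrow> ((nat \<Rightarrow> real) \<Rightarrow> ennreal) \<Rightarrow> (nat \<Rightarrow> real) \<Rightarrow> ennreal" where
  "mnorm 0 p g x = g x"
| "mnorm (Suc k) p g x = Lnorm1 (p k) (\<lambda>t. mnorm k p g (x(k := t)))"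

definition Lmixed :: "nat \<Rightarrow> (nat \<Rightarrow> ennreal) \<Rightarrow> ((nat \<Rightarrow> real) \<Rightarrow> ennreal) \<Rightarrow> ennreal" where
  "Lmixed n p g = mnorm n p g (\<lambda>_. undefined)"

fun lmix :: "nat \<Rightarrow> (nat \<Rightarrow> ennreal) \<Rightarrow> ((nat \<Rightarrow> int) \<Rightarrow> ennreal) \<Rightarrow> (nat \<Rightarrow> int) \<Rightarrow> ennreal" where
  "lmix 0 s a k = a k"
| "lmix (Suc m) s a k = lnorm1 (s m) (\<lambda>j. lmix m s a (k(m := j)))"

definition lmixed :: "nat \<Rightarrow> (nat \<Rightarrow> ennreal) \<Rightarrow> ((nat \<Rightarrow> int) \<Rightarrow> ennreal) \<Rightarrow> ennreal" where
  "lmixed n s a = lmix n s a (\<lambda>_. undefined)"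

definition ballN :: "nat \<Rightarrow> (nat \<Rightarrow> real) \<Rightarrow> real \<Rightarrow> (nat \<Rightarrow> real) set" where
  "ballN n y r = {x \<in> space (Rn n). sqrt (\<Sum>i<n. (x i - y i)^2) < r}"

definition cubeN :: "nat \<Rightarrow> real \<Rightarrow> (nat \<Rightarrow> int) \<Rightarrow> (nat \<Rightarrow> real) set" where
  "cubeN n r k = {x \<in> space (Rn n). \<forall>i<n. r * of_int (k i) \<le> x i \<and> x i < r * (of_int (k i) + 1)}"

text \<open>Locally integrable functions on R^n: measurable and integrable on every
  bounded box [-R,R]^n (every compact set lies in such a box).\<close>
definition L1loc :: "nat \<Rightarrow> ((nat \<Rightarrow> real) \<Rightarrow> complex) \<Rightarrow> bool" where
  "L1loc n f \<longleftrightarrow> f \<in> borel_measurable (Rn n) \<and>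
     (\<forall>R>0. set_integrable (Rn n) {x \<in> space (Rn n). \<forall>i<n. \<bar>x i\<bar> \<le> R} f)"

end

(*
  Both inequalities are proved by comparison with step functions. If A is a function on Z^n
  and rho > 0, the function y |-> A(floor(y / rho)) on R^n has mixed L^s norm rho^sigma times
  the mixed l^s norm of A, where sigma = sum_i 1/s_i: in each coordinate, t |-> floor(t / rho)
  pushes Lebesgue measure forward to rho times counting measure on Z.

  A ball B(y,r) is covered by the 3^n cubes Q_{r, floor(y/r) + e}, e in {-1,0,1}^n, so
  y |-> |f chi_{B(y,r)}|_{L^p} is dominated by a step function built from translates of the
  cube norms. Conversely every cube Q_{r,k} is the union of the n^n cubes Q_{r/n, n k + e},
  e in {0,...,n-1}^n, and the cube of side r/n containing y lies in B(y,r).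

  Apart from this the mixed norms enter only through monotonicity, homogeneity, the
  quasi-triangle inequality |g + h| <= 4 (|g| + |h|), and the fact that an injective
  reindexing of Z does not increase an l^q norm.
*)

theory Submission
  imports Defs "HOL-Probability.Essential_Supremum"
begin

section \<open>Real powers and L^q norms of nonnegative functions\<close>

lemma epow_top [simp]: "epow top q = top"
  by (simp add: epow_def)

lemma epow_ennreal: "0 \<le> a \<Longrightarrow> epow (ennreal a) q = ennreal (a powr q)"
  by (simp add: epow_def)

lemma epow_0 [simp]: "0 < q \<Longrightarrow> epow 0 q = 0"
  by (simp add: epow_def)

lemma epow_mono: "x \<le> y \<Longrightarrow> 0 \<le> q \<Longrightarrow> epow x q \<le> epow y q"
  by (cases x; cases y) (auto simp: epow_ennreal powr_mono2 top_unique)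

lemma epow_cmult: "0 < c \<Longrightarrow> 0 < q \<Longrightarrow> epow (ennreal c * x) q = ennreal (c powr q) * epow x q"
  by (cases x) (auto simp: epow_ennreal ennreal_mult_top powr_mult ennreal_mult[symmetric])

lemma epow_add_le:
  assumes "0 < q"
  shows "epow (x + y) q \<le> ennreal (2 powr q) * (epow x q + epow y q)"
proof (cases "x = top \<or> y = top")
  case True
  then show ?thesis by (auto simp: ennreal_mult_top)
next
  case False
  then obtain a b where ab: "x = ennreal a" "y = ennreal b" "0 \<le> a" "0 \<le> b"
    by (cases x; cases y) auto
  have "(a + b) powr q \<le> (2 * max a b) powr q"
    using ab assms by (intro powr_mono2) auto
  also have "\<dots> = 2 powr q * max a b powr q"
    using ab by (simp add: powr_mult)
  also have "\<dots> \<le> 2 powr q * (a powr q + b powr q)"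
    by (intro mult_left_mono) (auto simp: max_def)
  finally show ?thesis
    using ab by (simp add: epow_ennreal ennreal_mult[symmetric] ennreal_plus[symmetric] del: ennreal_plus)
qed

lemma measurable_epow [measurable]:
  assumes [measurable]: "f \<in> borel_measurable M"
  shows "(\<lambda>x. epow (f x) q) \<in> borel_measurable M"
  unfolding epow_def by measurable

lemma enn2real_ge_1: "1 \<le> q \<Longrightarrow> q \<noteq> \<infinity> \<Longrightarrow> 1 \<le> enn2real q"
  using enn2real_mono[of 1 q] by (simp add: less_top)

lemma ennreal_divide_mult_cancel: "0 < c \<Longrightarrow> ennreal (1 / c) * (ennreal c * x) = x"
  by (simp add: mult.assoc[symmetric] ennreal_mult[symmetric] del: ennreal_mult')

lemma ennreal_le_mult_self: "1 \<le> c \<Longrightarrow> (x :: ennreal) \<le> c * x"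
  using mult_right_mono[of 1 c x] by simp

lemma ennreal_numeral_power: "numeral w ^ j = ennreal (numeral w ^ j)"
  by (metis ennreal_numeral ennreal_power zero_le_numeral)

lemma AE_scale_measure_iff: "r \<noteq> 0 \<Longrightarrow> (AE x in scale_measure r M. P x) \<longleftrightarrow> (AE x in M. P x)"
  by (simp add: eventually_ae_filter null_sets_def space_scale_measure)

definition Lnorm :: "'a measure \<Rightarrow> ennreal \<Rightarrow> ('a \<Rightarrow> ennreal) \<Rightarrow> ennreal" where
  "Lnorm M q h = (if q = \<infinity> then Inf {b. AE t in M. h t \<le> b}
     else epow (\<integral>\<^sup>+ t. epow (h t) (enn2real q) \<partial>M) (1 / enn2real q))"

lemma Lnorm1_eq_Lnorm: "Lnorm1 q h = Lnorm lborel q h"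
  by (simp add: Lnorm1_def Lnorm_def)

lemma lnorm1_eq_Lnorm: "lnorm1 q a = Lnorm (count_space UNIV) q a"
proof -
  have "(SUP k. a k) = Inf {b. \<forall>k. a k \<le> b}"
    by (intro antisym Inf_greatest SUP_least) (auto intro: Inf_lower SUP_upper)
  then show ?thesis by (simp add: lnorm1_def Lnorm_def AE_count_space)
qed

lemma AE_le_Inf_AE_bounds:
  fixes h :: "'a \<Rightarrow> ennreal"
  shows "h \<in> borel_measurable M \<Longrightarrow> AE t in M. h t \<le> Inf {b. AE t in M. h t \<le> b}"
  using esssup_AE[where f = h and M = M] by (simp add: esssup_eq_AE)

lemma Lnorm_mono:
  assumes "1 \<le> q" "\<And>t. t \<in> space M \<Longrightarrow> h t \<le> g t"
  shows "Lnorm M q h \<le> Lnorm M q g"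
proof (cases "q = \<infinity>")
  case True
  have "AE t in M. h t \<le> c" if "AE t in M. g t \<le> c" for c
    using that AE_space by eventually_elim (use assms(2) in \<open>blast intro: order_trans\<close>)
  then have "{b. AE t in M. g t \<le> b} \<subseteq> {b. AE t in M. h t \<le> b}"
    by blast
  then show ?thesis
    using True by (simp add: Lnorm_def Inf_superset_mono)
next
  case False
  then have "0 < enn2real q" using enn2real_ge_1[OF assms(1)] by simp
  then show ?thesis
    using False assms(2) by (auto simp: Lnorm_def intro!: epow_mono nn_integral_mono)
qed

lemma Lnorm_0: "1 \<le> q \<Longrightarrow> Lnorm M q (\<lambda>_. 0) = 0"
  using enn2real_ge_1[of q] by (auto simp: Lnorm_def bot_ennreal)

lemma Lnorm_cmult_le:
  assumes "1 \<le> q" "0 < c" "h \<in> borel_measurable M"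
  shows "Lnorm M q (\<lambda>t. ennreal c * h t) \<le> ennreal c * Lnorm M q h"
proof (cases "q = \<infinity>")
  case True
  have "AE t in M. ennreal c * h t \<le> ennreal c * Inf {b. AE t in M. h t \<le> b}"
    using AE_le_Inf_AE_bounds[OF assms(3)] by eventually_elim (rule mult_left_mono, auto)
  then show ?thesis using True by (simp add: Lnorm_def Inf_lower)
next
  case False
  define Q where "Q = enn2real q"
  have Q: "0 < Q" using enn2real_ge_1[OF assms(1) False] by (simp add: Q_def)
  have "(\<integral>\<^sup>+ t. epow (ennreal c * h t) Q \<partial>M) = ennreal (c powr Q) * (\<integral>\<^sup>+ t. epow (h t) Q \<partial>M)"
    using Q assms by (simp add: epow_cmult nn_integral_cmult)
  then have "Lnorm M q (\<lambda>t. ennreal c * h t)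
      = ennreal ((c powr Q) powr (1 / Q)) * epow (\<integral>\<^sup>+ t. epow (h t) Q \<partial>M) (1 / Q)"
    using False Q assms by (simp add: Lnorm_def Q_def epow_cmult)
  also have "(c powr Q) powr (1 / Q) = c"
    using Q assms by (simp add: powr_powr)
  finally show ?thesis using False by (simp add: Lnorm_def Q_def)
qed

lemma Lnorm_cmult:
  assumes "1 \<le> q" "0 < c" "h \<in> borel_measurable M"
  shows "Lnorm M q (\<lambda>t. ennreal c * h t) = ennreal c * Lnorm M q h"
proof (rule antisym)
  show "Lnorm M q (\<lambda>t. ennreal c * h t) \<le> ennreal c * Lnorm M q h"
    using assms by (rule Lnorm_cmult_le)
  have "Lnorm M q h = Lnorm M q (\<lambda>t. ennreal (1 / c) * (ennreal c * h t))"
    using assms(2) by (simp add: ennreal_divide_mult_cancel)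
  also have "\<dots> \<le> ennreal (1 / c) * Lnorm M q (\<lambda>t. ennreal c * h t)"
    using assms by (intro Lnorm_cmult_le) auto
  finally have "ennreal c * Lnorm M q h \<le> ennreal c * (ennreal (1 / c) * Lnorm M q (\<lambda>t. ennreal c * h t))"
    by (rule mult_left_mono) simp
  also have "\<dots> = Lnorm M q (\<lambda>t. ennreal c * h t)"
    using assms(2) ennreal_divide_mult_cancel[of "1 / c"] by simp
  finally show "ennreal c * Lnorm M q h \<le> Lnorm M q (\<lambda>t. ennreal c * h t)" .
qed

lemma Lnorm_add_le:
  assumes "1 \<le> q" "h \<in> borel_measurable M" "g \<in> borel_measurable M"
  shows "Lnorm M q (\<lambda>t. h t + g t) \<le> 4 * (Lnorm M q h + Lnorm M q g)"
proof (cases "q = \<infinity>")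
  case True
  have "AE t in M. h t + g t \<le> Inf {b. AE t in M. h t \<le> b} + Inf {b. AE t in M. g t \<le> b}"
    using AE_le_Inf_AE_bounds[OF assms(2)] AE_le_Inf_AE_bounds[OF assms(3)] by eventually_elim (rule add_mono)
  then have "Lnorm M q (\<lambda>t. h t + g t) \<le> Lnorm M q h + Lnorm M q g"
    using True by (simp add: Lnorm_def Inf_lower)
  also have "\<dots> \<le> 4 * (Lnorm M q h + Lnorm M q g)"
    by (simp add: ennreal_le_mult_self distrib_left add_mono del: distrib_left_numeral)
  finally show ?thesis .
next
  case False
  define Q where "Q = enn2real q"
  have Q: "1 \<le> Q" using enn2real_ge_1[OF assms(1) False] by (simp add: Q_def)
  define A where "A = (\<integral>\<^sup>+ t. epow (h t) Q \<partial>M)"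
  define B where "B = (\<integral>\<^sup>+ t. epow (g t) Q \<partial>M)"
  have "(\<integral>\<^sup>+ t. epow (h t + g t) Q \<partial>M) \<le> (\<integral>\<^sup>+ t. ennreal (2 powr Q) * (epow (h t) Q + epow (g t) Q) \<partial>M)"
    using Q by (intro nn_integral_mono epow_add_le) auto
  also have "\<dots> = ennreal (2 powr Q) * (A + B)"
    unfolding A_def B_def using assms by (simp add: nn_integral_cmult nn_integral_add)
  finally have "Lnorm M q (\<lambda>t. h t + g t) \<le> epow (ennreal (2 powr Q) * (A + B)) (1 / Q)"
    using False Q by (simp add: Lnorm_def Q_def epow_mono)
  also have "\<dots> = 2 * epow (A + B) (1 / Q)"
    using Q by (simp add: epow_cmult powr_powr)
  also have "\<dots> \<le> 2 * (ennreal (2 powr (1 / Q)) * (epow A (1 / Q) + epow B (1 / Q)))"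
    using Q by (intro mult_left_mono epow_add_le) auto
  also have "\<dots> \<le> 2 * (2 * (epow A (1 / Q) + epow B (1 / Q)))"
  proof -
    have "2 powr (1 / Q) \<le> 2"
      using Q powr_mono[of "1 / Q" 1 "2 :: real"] by simp
    then show ?thesis
      by (intro mult_left_mono mult_right_mono) (auto dest: ennreal_leI)
  qed
  also have "\<dots> = 4 * (Lnorm M q h + Lnorm M q g)"
    using False by (simp add: Lnorm_def A_def B_def Q_def mult.assoc[symmetric])
  finally show ?thesis .
qed

lemma Lnorm_sum_le:
  assumes "1 \<le> q" "finite E" "\<And>e. e \<in> E \<Longrightarrow> h e \<in> borel_measurable M"
  shows "Lnorm M q (\<lambda>t. \<Sum>e\<in>E. h e t) \<le> 4 ^ card E * (\<Sum>e\<in>E. Lnorm M q (h e))"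
  using assms(2,3)
proof (induction E rule: finite_induct)
  case empty
  then show ?case by (simp add: Lnorm_0 assms(1))
next
  case (insert a E)
  have "(\<lambda>t. \<Sum>e\<in>E. h e t) \<in> borel_measurable M"
    using insert by (intro borel_measurable_sum) auto
  then have "Lnorm M q (\<lambda>t. \<Sum>e\<in>insert a E. h e t) \<le> 4 * (Lnorm M q (h a) + Lnorm M q (\<lambda>t. \<Sum>e\<in>E. h e t))"
    using insert assms(1) by (simp add: Lnorm_add_le del: distrib_left_numeral)
  also have "\<dots> \<le> 4 * (4 ^ card E * Lnorm M q (h a) + 4 ^ card E * (\<Sum>e\<in>E. Lnorm M q (h e)))"
    using insert by (intro mult_left_mono add_mono) (auto intro: ennreal_le_mult_self one_le_power)
  also have "\<dots> = 4 ^ card (insert a E) * (\<Sum>e\<in>insert a E. Lnorm M q (h e))"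
    using insert by (simp add: distrib_left mult.assoc)
  finally show ?case .
qed

lemma Lnorm_count_space_inj_le:
  assumes "1 \<le> q" "inj g"
  shows "Lnorm (count_space UNIV) q (\<lambda>j. B (g j)) \<le> Lnorm (count_space UNIV) q B"
proof (cases "q = \<infinity>")
  case True
  then show ?thesis by (auto simp: Lnorm_def AE_count_space intro!: Inf_superset_mono)
next
  case False
  have "(\<integral>\<^sup>+ j. F (g j) \<partial>count_space UNIV) \<le> (\<integral>\<^sup>+ k. F k \<partial>count_space UNIV)" for F :: "_ \<Rightarrow> ennreal"
  proof -
    have "(\<integral>\<^sup>+ j. F (g j) \<partial>count_space UNIV) = (\<integral>\<^sup>+ k. F k \<partial>count_space (range g))"
      using assms(2) by (intro nn_integral_bij_count_space) (simp add: bij_betw_def)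
    also have "\<dots> = (\<integral>\<^sup>+ k. F k * indicator (range g) k \<partial>count_space UNIV)"
      by (simp add: nn_integral_count_space_indicator)
    also have "\<dots> \<le> (\<integral>\<^sup>+ k. F k \<partial>count_space UNIV)"
      by (intro nn_integral_mono) (simp add: indicator_def)
    finally show ?thesis .
  qed
  from this[of "\<lambda>k. epow (B k) (enn2real q)"] show ?thesis
    using False enn2real_ge_1[OF assms(1) False] by (simp add: Lnorm_def epow_mono)
qed

lemma Lnorm_distr:
  assumes [measurable]: "f \<in> M \<rightarrow>\<^sub>M N" "h \<in> borel_measurable N"
  shows "Lnorm (distr M N f) q h = Lnorm M q (\<lambda>x. h (f x))"
proof -
  have "(AE y in distr M N f. h y \<le> c) \<longleftrightarrow> (AE x in M. h (f x) \<le> c)" for c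
    by (intro AE_distr_iff) measurable
  then show ?thesis
    using assms by (simp add: Lnorm_def nn_integral_distr)
qed

lemma Lnorm_scale_measure:
  assumes "0 < r" "1 \<le> q" "h \<in> borel_measurable M"
  shows "Lnorm (scale_measure (ennreal r) M) q h = ennreal (r powr enn2real (inverse q)) * Lnorm M q h"
proof (cases "q = \<infinity>")
  case True
  then show ?thesis using assms(1) by (simp add: Lnorm_def AE_scale_measure_iff)
next
  case False
  define Q where "Q = enn2real q"
  have Q: "1 \<le> Q" using enn2real_ge_1[OF assms(2) False] by (simp add: Q_def)
  have "enn2real (inverse q) = 1 / Q"
    using False Q by (cases q) (auto simp: Q_def inverse_ennreal divide_inverse)
  then show ?thesis
    using False Q assms by (simp add: Lnorm_def Q_def nn_integral_scale_measure epow_cmult)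
qed

section \<open>Step functions on the real line\<close>

lemma floor_divide_eq_iff:
  fixes \<rho> t :: real
  assumes "0 < \<rho>"
  shows "\<lfloor>t / \<rho>\<rfloor> = k \<longleftrightarrow> \<rho> * of_int k \<le> t \<and> t < \<rho> * (of_int k + 1)"
  using assms by (simp add: floor_eq_iff pos_le_divide_eq pos_divide_less_eq mult.commute)

lemma vimage_floor_divide:
  fixes \<rho> :: real
  assumes "0 < \<rho>"
  shows "(\<lambda>t. \<lfloor>t / \<rho>\<rfloor>) -` {k} = {\<rho> * of_int k ..< \<rho> * (of_int k + 1)}"
  by (simp add: set_eq_iff floor_divide_eq_iff[OF assms])

lemma measurable_floor_divide:
  fixes \<rho> :: real
  assumes "0 < \<rho>"
  shows "(\<lambda>t. \<lfloor>t / \<rho>\<rfloor>) \<in> lborel \<rightarrow>\<^sub>M count_space UNIV"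
  using vimage_floor_divide[OF assms] by (subst measurable_count_space_eq2_countable) auto

lemma distr_floor_divide_lborel:
  assumes "0 < \<rho>"
  shows "distr lborel (count_space UNIV) (\<lambda>t. \<lfloor>t / \<rho>\<rfloor>) = scale_measure (ennreal \<rho>) (count_space UNIV)"
proof (rule measure_eqI_countable[where A = UNIV])
  fix k :: int
  have "emeasure (distr lborel (count_space UNIV) (\<lambda>t. \<lfloor>t / \<rho>\<rfloor>)) {k}
      = emeasure lborel {\<rho> * of_int k ..< \<rho> * (of_int k + 1)}"
    using assms by (simp add: emeasure_distr measurable_floor_divide vimage_floor_divide)
  also have "\<dots> = ennreal \<rho>"
    using assms by (simp add: algebra_simps)
  finally show "emeasure (distr lborel (count_space UNIV) (\<lambda>t. \<lfloor>t / \<rho>\<rfloor>)) {k}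
      = emeasure (scale_measure (ennreal \<rho>) (count_space UNIV)) {k}"
    by simp
qed auto

lemma Lnorm_floor_divide:
  assumes "0 < \<rho>" "1 \<le> q"
  shows "Lnorm lborel q (\<lambda>t. B \<lfloor>t / \<rho>\<rfloor>)
    = ennreal (\<rho> powr enn2real (inverse q)) * Lnorm (count_space UNIV) q B"
proof -
  have "Lnorm lborel q (\<lambda>t. B \<lfloor>t / \<rho>\<rfloor>) = Lnorm (distr lborel (count_space UNIV) (\<lambda>t. \<lfloor>t / \<rho>\<rfloor>)) q B"
    using measurable_floor_divide[OF assms(1)] by (simp add: Lnorm_distr)
  then show ?thesis
    using assms by (simp add: distr_floor_divide_lborel Lnorm_scale_measure)
qed

section \<open>Iterated mixed norms\<close>

lemma borel_measurable_Inf_AE_bounds_lborel: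
  fixes H :: "'a \<Rightarrow> real \<Rightarrow> ennreal"
  assumes H [measurable]: "(\<lambda>(x, t). H x t) \<in> borel_measurable (N \<Otimes>\<^sub>M lborel)"
  shows "(\<lambda>x. Inf {b. AE t in lborel. H x t \<le> b}) \<in> borel_measurable N"
proof (rule borel_measurableI_le)
  fix d
  have "Inf {b. AE t in lborel. H x t \<le> b} \<le> d \<longleftrightarrow> emeasure lborel {t. d < H x t} = 0"
    if "x \<in> space N" for x
  proof -
    have [measurable]: "H x \<in> borel_measurable lborel"
      using measurable_compose_Pair1[OF that H] by simp
    have "Inf {b. AE t in lborel. H x t \<le> b} \<le> d \<longleftrightarrow> (AE t in lborel. H x t \<le> d)"
      using AE_le_Inf_AE_bounds[of "H x" lborel] by (auto elim: eventually_mono intro: Inf_lower order_trans)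
    also have "\<dots> \<longleftrightarrow> emeasure lborel {t. d < H x t} = 0"
      by (rule AE_iff_measurable) (auto simp: not_le)
    finally show ?thesis .
  qed
  then have "{x \<in> space N. Inf {b. AE t in lborel. H x t \<le> b} \<le> d}
      = {x \<in> space N. emeasure lborel {t. d < H x t} = 0}"
    by auto
  also have "\<dots> \<in> sets N"
    by measurable
  finally show "{x \<in> space N. Inf {b. AE t in lborel. H x t \<le> b} \<le> d} \<in> sets N" .
qed

lemma measurable_fun_upd_Rn [measurable]:
  "m < n \<Longrightarrow> (\<lambda>(x, t). x(m := t)) \<in> Rn n \<Otimes>\<^sub>M lborel \<rightarrow>\<^sub>M Rn n"
  using measurable_add_dim[of m "{..<n}" "\<lambda>_. lborel"] by (simp add: insert_absorb)

lemma fun_upd_in_space_Rn: "x \<in> space (Rn n) \<Longrightarrow> m < n \<Longrightarrow> x(m := t) \<in> space (Rn n)"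
  by (auto simp: space_PiM PiE_iff extensional_def)

lemma measurable_fun_upd_Rn_coordinate:
  "x \<in> space (Rn n) \<Longrightarrow> m < n \<Longrightarrow> (\<lambda>t. x(m := t)) \<in> lborel \<rightarrow>\<^sub>M Rn n"
  using measurable_compose_Pair1[OF _ measurable_fun_upd_Rn] by fastforce

lemma mnorm_mono:
  assumes "\<And>x. F x \<le> G x" "\<forall>i<m. 1 \<le> p i"
  shows "mnorm m p F x \<le> mnorm m p G x"
  using assms(2)
proof (induction m arbitrary: x)
  case 0
  then show ?case using assms(1) by simp
next
  case (Suc m)
  then show ?case by (simp add: Lnorm1_eq_Lnorm Lnorm_mono)
qed

lemma borel_measurable_mnorm:
  assumes F: "F \<in> borel_measurable (Rn n)" and "m \<le> n" "\<forall>i<n. 1 \<le> p i"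
  shows "mnorm m p F \<in> borel_measurable (Rn n)"
  using assms(2)
proof (induction m)
  case 0
  then show ?case using F by (simp add: fun_eq_iff[of "mnorm 0 p F"])
next
  case (Suc m)
  then have [measurable]: "mnorm m p F \<in> borel_measurable (Rn n)" and "m < n"
    by auto
  then have [measurable]: "(\<lambda>(x, t). mnorm m p F (x(m := t))) \<in> borel_measurable (Rn n \<Otimes>\<^sub>M lborel)"
    by measurable
  show ?case
  proof (cases "p m = \<infinity>")
    case True
    then show ?thesis
      using borel_measurable_Inf_AE_bounds_lborel[of "\<lambda>x t. mnorm m p F (x(m := t))"]
      by (simp add: Lnorm1_def)
  next
    case False
    then show ?thesis by (simp add: Lnorm1_def) measurable
  qed
qed

lemma mnorm_sum_le:
  assumes "finite E" "\<And>e. e \<in> E \<Longrightarrow> g e \<in> borel_measurable (Rn n)"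
    and "m \<le> n" "\<forall>i<n. 1 \<le> p i" "x \<in> space (Rn n)"
  shows "mnorm m p (\<lambda>x. \<Sum>e\<in>E. g e x) x \<le> ennreal (4 ^ (card E * m)) * (\<Sum>e\<in>E. mnorm m p (g e) x)"
  using assms(3,5)
proof (induction m arbitrary: x)
  case 0
  then show ?case by simp
next
  case (Suc m)
  have "m < n" and pm: "1 \<le> p m"
    using Suc.prems assms(4) by auto
  have meas: "(\<lambda>t. mnorm m p (g e) (x(m := t))) \<in> borel_measurable lborel" if "e \<in> E" for e
    using measurable_compose[OF measurable_fun_upd_Rn_coordinate borel_measurable_mnorm]
      Suc.prems \<open>m < n\<close> assms(2)[OF that] assms(4) by simp
  define K :: real where "K = 4 ^ (card E * m)"
  have "mnorm (Suc m) p (\<lambda>x. \<Sum>e\<in>E. g e x) x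
      \<le> Lnorm lborel (p m) (\<lambda>t. ennreal K * (\<Sum>e\<in>E. mnorm m p (g e) (x(m := t))))"
    unfolding K_def using Suc \<open>m < n\<close> pm
    by (auto simp: Lnorm1_eq_Lnorm fun_upd_in_space_Rn intro!: Lnorm_mono)
  also have "\<dots> = ennreal K * Lnorm lborel (p m) (\<lambda>t. \<Sum>e\<in>E. mnorm m p (g e) (x(m := t)))"
    using pm meas by (intro Lnorm_cmult) (auto simp: K_def)
  also have "\<dots> \<le> ennreal K * (4 ^ card E * (\<Sum>e\<in>E. Lnorm lborel (p m) (\<lambda>t. mnorm m p (g e) (x(m := t)))))"
    using pm meas assms(1) by (intro mult_left_mono Lnorm_sum_le) auto
  also have "\<dots> = ennreal (4 ^ (card E * Suc m)) * (\<Sum>e\<in>E. mnorm (Suc m) p (g e) x)"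
    by (simp add: K_def Lnorm1_eq_Lnorm ennreal_numeral_power power_add ennreal_mult mult.assoc mult.left_commute)
  finally show ?case .
qed

lemma Lmixed_mono: "(\<And>x. F x \<le> G x) \<Longrightarrow> \<forall>i<n. 1 \<le> p i \<Longrightarrow> Lmixed n p F \<le> Lmixed n p G"
  unfolding Lmixed_def by (rule mnorm_mono) auto

lemma Lmixed_sum_le:
  assumes "finite E" "\<And>e. e \<in> E \<Longrightarrow> g e \<in> borel_measurable (Rn n)" "\<forall>i<n. 1 \<le> p i"
  shows "Lmixed n p (\<lambda>x. \<Sum>e\<in>E. g e x) \<le> ennreal (4 ^ (card E * n)) * (\<Sum>e\<in>E. Lmixed n p (g e))"
  unfolding Lmixed_def using assms
  by (intro mnorm_sum_le) (auto simp: space_PiM PiE_iff extensional_def)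

lemma lmix_mono:
  assumes "\<And>k. A k \<le> B k" "\<forall>i<m. 1 \<le> s i"
  shows "lmix m s A k \<le> lmix m s B k"
  using assms(2)
proof (induction m arbitrary: k)
  case 0
  then show ?case using assms(1) by simp
next
  case (Suc m)
  then show ?case by (simp add: lnorm1_eq_Lnorm Lnorm_mono)
qed

lemma lmix_cong_coordinates:
  assumes "\<forall>i\<ge>m. k i = k' i"
  shows "lmix m s A k = lmix m s A k'"
  using assms
proof (induction m arbitrary: k k')
  case 0
  then show ?case by (simp add: fun_eq_iff)
next
  case (Suc m)
  then have "lmix m s A (k(m := j)) = lmix m s A (k'(m := j))" for j
    by (intro Suc.IH) auto
  then show ?case by simp
qed

lemma lmix_cmult:
  assumes "0 < c" "\<forall>i<m. 1 \<le> s i"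
  shows "lmix m s (\<lambda>k. ennreal c * A k) k = ennreal c * lmix m s A k"
  using assms(2)
proof (induction m arbitrary: k)
  case 0
  then show ?case by simp
next
  case (Suc m)
  then show ?case using assms(1) by (simp add: lnorm1_eq_Lnorm Lnorm_cmult)
qed

lemma lmix_sum_le:
  assumes "finite E" "\<forall>i<m. 1 \<le> s i"
  shows "lmix m s (\<lambda>k. \<Sum>e\<in>E. A e k) k \<le> ennreal (4 ^ (card E * m)) * (\<Sum>e\<in>E. lmix m s (A e) k)"
  using assms(2)
proof (induction m arbitrary: k)
  case 0
  then show ?case by simp
next
  case (Suc m)
  have sm: "1 \<le> s m" using Suc.prems by auto
  define K :: real where "K = 4 ^ (card E * m)"
  have "lmix (Suc m) s (\<lambda>k. \<Sum>e\<in>E. A e k) k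
      \<le> Lnorm (count_space UNIV) (s m) (\<lambda>j. ennreal K * (\<Sum>e\<in>E. lmix m s (A e) (k(m := j))))"
    unfolding K_def using Suc sm by (auto simp: lnorm1_eq_Lnorm intro!: Lnorm_mono)
  also have "\<dots> = ennreal K * Lnorm (count_space UNIV) (s m) (\<lambda>j. \<Sum>e\<in>E. lmix m s (A e) (k(m := j)))"
    using sm by (intro Lnorm_cmult) (auto simp: K_def)
  also have "\<dots> \<le> ennreal K * (4 ^ card E * (\<Sum>e\<in>E. Lnorm (count_space UNIV) (s m) (\<lambda>j. lmix m s (A e) (k(m := j)))))"
    using sm assms(1) by (intro mult_left_mono Lnorm_sum_le) auto
  also have "\<dots> = ennreal (4 ^ (card E * Suc m)) * (\<Sum>e\<in>E. lmix (Suc m) s (A e) k)"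
    by (simp add: K_def lnorm1_eq_Lnorm ennreal_numeral_power power_add ennreal_mult mult.assoc mult.left_commute)
  finally show ?case .
qed

definition index_affine :: "nat \<Rightarrow> int \<Rightarrow> (nat \<Rightarrow> int) \<Rightarrow> (nat \<Rightarrow> int) \<Rightarrow> nat \<Rightarrow> int" where
  "index_affine n L e k = (\<lambda>i. if i < n then L * k i + e i else k i)"

lemma lmix_index_affine_le:
  assumes "1 \<le> L" "m \<le> n" "\<forall>i<n. 1 \<le> s i"
  shows "lmix m s (\<lambda>k. A (index_affine n L e k)) k \<le> lmix m s A (index_affine n L e k)"
  using assms(2)
proof (induction m arbitrary: k)
  case 0
  then show ?case by simp
next
  case (Suc m)
  have "m < n" "1 \<le> s m"
    using Suc.prems assms(3) by auto
  have upd: "index_affine n L e (k(m := j)) = (index_affine n L e k)(m := L * j + e m)" for j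
    using \<open>m < n\<close> by (auto simp: index_affine_def fun_eq_iff)
  have "inj (\<lambda>j. L * j + e m)"
    using assms(1) by (auto simp: inj_def)
  have "lmix m s (\<lambda>k. A (index_affine n L e k)) (k(m := j))
      \<le> lmix m s A ((index_affine n L e k)(m := L * j + e m))" for j
    using Suc by (subst upd[symmetric]) simp
  then have "lmix (Suc m) s (\<lambda>k. A (index_affine n L e k)) k
      \<le> Lnorm (count_space UNIV) (s m) (\<lambda>j. lmix m s A ((index_affine n L e k)(m := L * j + e m)))"
    using \<open>1 \<le> s m\<close> by (simp add: lnorm1_eq_Lnorm Lnorm_mono)
  also have "\<dots> \<le> Lnorm (count_space UNIV) (s m) (\<lambda>j. lmix m s A ((index_affine n L e k)(m := j)))"
    using \<open>1 \<le> s m\<close> \<open>inj _\<close> by (rule Lnorm_count_space_inj_le)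
  also have "\<dots> = lmix (Suc m) s A (index_affine n L e k)"
    by (simp add: lnorm1_eq_Lnorm)
  finally show ?case .
qed

lemma lmixed_mono: "(\<And>k. A k \<le> B k) \<Longrightarrow> \<forall>i<n. 1 \<le> s i \<Longrightarrow> lmixed n s A \<le> lmixed n s B"
  unfolding lmixed_def by (rule lmix_mono) auto

lemma lmixed_cmult: "0 < c \<Longrightarrow> \<forall>i<n. 1 \<le> s i \<Longrightarrow> lmixed n s (\<lambda>k. ennreal c * A k) = ennreal c * lmixed n s A"
  unfolding lmixed_def by (rule lmix_cmult) auto

lemma lmixed_sum_index_affine_le:
  assumes "finite E" "1 \<le> L" "\<forall>i<n. 1 \<le> s i"
  shows "lmixed n s (\<lambda>k. \<Sum>e\<in>E. A (index_affine n L e k))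
    \<le> ennreal (4 ^ (card E * n) * card E) * lmixed n s A"
proof -
  have "lmixed n s (\<lambda>k. \<Sum>e\<in>E. A (index_affine n L e k))
      \<le> ennreal (4 ^ (card E * n)) * (\<Sum>e\<in>E. lmixed n s (\<lambda>k. A (index_affine n L e k)))"
    unfolding lmixed_def using assms by (intro lmix_sum_le) auto
  also have "\<dots> \<le> ennreal (4 ^ (card E * n)) * (\<Sum>e\<in>E. lmixed n s A)"
  proof (intro mult_left_mono sum_mono)
    fix e
    have "lmixed n s (\<lambda>k. A (index_affine n L e k)) \<le> lmix n s A (index_affine n L e (\<lambda>_. undefined))"
      unfolding lmixed_def using assms by (intro lmix_index_affine_le) auto
    also have "\<dots> = lmixed n s A"
      unfolding lmixed_def by (rule lmix_cong_coordinates) (simp add: index_affine_def)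
    finally show "lmixed n s (\<lambda>k. A (index_affine n L e k)) \<le> lmixed n s A" .
  qed simp
  also have "\<dots> = ennreal (4 ^ (card E * n) * card E) * lmixed n s A"
    by (simp add: ennreal_mult ennreal_of_nat_eq_real_of_nat mult.assoc)
  finally show ?thesis .
qed

definition cube_index :: "real \<Rightarrow> nat \<Rightarrow> (nat \<Rightarrow> real) \<Rightarrow> nat \<Rightarrow> int" where
  "cube_index \<rho> n y = (\<lambda>i. if i < n then \<lfloor>y i / \<rho>\<rfloor> else undefined)"

lemma mnorm_cube_index:
  assumes "0 < \<rho>" "\<forall>i<n. 1 \<le> s i" "m \<le> n"
  shows "mnorm m s (\<lambda>y. A (cube_index \<rho> n y)) y
    = ennreal (\<rho> powr (\<Sum>i<m. enn2real (inverse (s i)))) * lmix m s A (cube_index \<rho> n y)"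
  using assms(3)
proof (induction m arbitrary: y)
  case 0
  then show ?case using assms(1) by simp
next
  case (Suc m)
  have "m < n" "1 \<le> s m"
    using Suc.prems assms(2) by auto
  define c where "c = \<rho> powr (\<Sum>i<m. enn2real (inverse (s i)))"
  define B where "B j = lmix m s A ((cube_index \<rho> n y)(m := j))" for j
  have upd: "cube_index \<rho> n (y(m := t)) = (cube_index \<rho> n y)(m := \<lfloor>t / \<rho>\<rfloor>)" for t
    using \<open>m < n\<close> by (auto simp: cube_index_def fun_eq_iff)
  have "mnorm (Suc m) s (\<lambda>y. A (cube_index \<rho> n y)) y = Lnorm lborel (s m) (\<lambda>t. ennreal c * B \<lfloor>t / \<rho>\<rfloor>)"
    using Suc by (simp add: Lnorm1_eq_Lnorm upd B_def c_def)
  also have "\<dots> = ennreal c * Lnorm lborel (s m) (\<lambda>t. B \<lfloor>t / \<rho>\<rfloor>)"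
    using \<open>1 \<le> s m\<close> assms(1) measurable_floor_divide[OF assms(1)]
    by (intro Lnorm_cmult) (auto simp: c_def)
  also have "\<dots> = ennreal c * (ennreal (\<rho> powr enn2real (inverse (s m))) * Lnorm (count_space UNIV) (s m) B)"
    using assms(1) \<open>1 \<le> s m\<close> by (simp add: Lnorm_floor_divide)
  also have "\<dots> = ennreal (\<rho> powr (\<Sum>i<Suc m. enn2real (inverse (s i)))) * lmix (Suc m) s A (cube_index \<rho> n y)"
    using assms(1) by (simp add: c_def B_def[abs_def] lnorm1_eq_Lnorm powr_add ennreal_mult mult.assoc)
  finally show ?case .
qed

lemma Lmixed_cube_index:
  assumes "0 < \<rho>" "\<forall>i<n. 1 \<le> s i"
  shows "Lmixed n s (\<lambda>y. A (cube_index \<rho> n y))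
    = ennreal (\<rho> powr (\<Sum>i<n. enn2real (inverse (s i)))) * lmixed n s A"
proof -
  have "lmix n s A (cube_index \<rho> n (\<lambda>_. undefined)) = lmixed n s A"
    unfolding lmixed_def by (rule lmix_cong_coordinates) (simp add: cube_index_def)
  then show ?thesis
    unfolding Lmixed_def using mnorm_cube_index[OF assms order_refl] by simp
qed

section \<open>Balls and cubes\<close>

lemma mem_cubeN_iff:
  "0 < \<rho> \<Longrightarrow> x \<in> cubeN n \<rho> k \<longleftrightarrow> x \<in> space (Rn n) \<and> (\<forall>i<n. \<lfloor>x i / \<rho>\<rfloor> = k i)"
  by (auto simp: cubeN_def floor_divide_eq_iff)

lemma sets_cubeN [measurable]: "cubeN n \<rho> k \<in> sets (Rn n)"
  unfolding cubeN_def by measurable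

lemma ballN_coordinate_less:
  assumes "x \<in> ballN n y r" "i < n"
  shows "\<bar>x i - y i\<bar> < r"
proof -
  have "\<bar>x i - y i\<bar> = sqrt ((x i - y i)\<^sup>2)"
    by simp
  also have "\<dots> \<le> sqrt (\<Sum>j<n. (x j - y j)\<^sup>2)"
    using assms(2) by (intro real_sqrt_le_mono member_le_sum) auto
  also have "\<dots> < r"
    using assms(1) by (simp add: ballN_def)
  finally show ?thesis .
qed

lemma ballN_subset_cubes:
  assumes "0 < r"
  shows "ballN n y r \<subseteq> (\<Union>e \<in> PiE {..<n} (\<lambda>_. {-1, 0, 1}). cubeN n r (index_affine n 1 e (cube_index r n y)))"
proof
  fix x assume x: "x \<in> ballN n y r"
  define e where "e = (\<lambda>i. if i < n then \<lfloor>x i / r\<rfloor> - \<lfloor>y i / r\<rfloor> else undefined)"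
  have "e i \<in> {-1, 0, 1}" if "i < n" for i
  proof -
    have "\<bar>x i / r - y i / r\<bar> < 1"
      using ballN_coordinate_less[OF x that] assms by (simp add: diff_divide_distrib[symmetric])
    then have "\<lfloor>x i / r\<rfloor> < \<lfloor>y i / r\<rfloor> + 2" "\<lfloor>y i / r\<rfloor> < \<lfloor>x i / r\<rfloor> + 2"
      by linarith+
    then show ?thesis
      using that by (auto simp: e_def)
  qed
  then have "e \<in> PiE {..<n} (\<lambda>_. {-1, 0, 1})"
    by (auto simp: PiE_iff e_def extensional_def)
  moreover have "x \<in> cubeN n r (index_affine n 1 e (cube_index r n y))"
    using x assms by (simp add: mem_cubeN_iff ballN_def index_affine_def cube_index_def e_def)
  ultimately show "x \<in> (\<Union>e \<in> PiE {..<n} (\<lambda>_. {-1, 0, 1}). cubeN n r (index_affine n 1 e (cube_index r n y)))"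
    by blast
qed

lemma cubeN_subset_subcubes:
  assumes "0 < r" "1 \<le> n"
  shows "cubeN n r k \<subseteq> (\<Union>e \<in> PiE {..<n} (\<lambda>_. {0..<int n}). cubeN n (r / n) (index_affine n (int n) e k))"
proof
  fix x assume x: "x \<in> cubeN n r k"
  define \<rho> where "\<rho> = r / n"
  have \<rho>: "0 < \<rho>" "x i / \<rho> = n * (x i / r)" for i
    using assms by (auto simp: \<rho>_def)
  define e where "e = (\<lambda>i. if i < n then \<lfloor>x i / \<rho>\<rfloor> - int n * k i else undefined)"
  have "e i \<in> {0..<int n}" if "i < n" for i
  proof -
    have "\<lfloor>x i / r\<rfloor> = k i"
      using x that assms(1) by (simp add: mem_cubeN_iff)
    then have "k i \<le> x i / r" "x i / r < k i + 1"
      by (auto simp: floor_eq_iff)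
    then have "n * k i \<le> n * (x i / r)" "n * (x i / r) < n * (k i + 1)"
      using assms(2) by (auto intro!: mult_left_mono mult_strict_left_mono simp del: times_divide_eq_right)
    then have "n * k i \<le> x i / \<rho>" "x i / \<rho> < n * k i + n"
      by (simp_all only: \<rho> distrib_left mult_1_right)
    then have "int n * k i \<le> \<lfloor>x i / \<rho>\<rfloor>" "\<lfloor>x i / \<rho>\<rfloor> < int n * k i + int n"
      by (auto simp: le_floor_iff floor_less_iff)
    then show ?thesis
      using that by (simp add: e_def)
  qed
  then have "e \<in> PiE {..<n} (\<lambda>_. {0..<int n})"
    by (auto simp: PiE_iff e_def extensional_def)
  moreover have "x \<in> cubeN n \<rho> (index_affine n (int n) e k)"
    using x \<rho> assms(1) by (simp add: mem_cubeN_iff index_affine_def e_def)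
  ultimately show "x \<in> (\<Union>e \<in> PiE {..<n} (\<lambda>_. {0..<int n}). cubeN n (r / n) (index_affine n (int n) e k))"
    by (auto simp: \<rho>_def)
qed

lemma cubeN_cube_index_subset_ballN:
  assumes "0 < r" "1 \<le> n"
  shows "cubeN n (r / n) (cube_index (r / n) n y) \<subseteq> ballN n y r"
proof
  fix x assume x: "x \<in> cubeN n (r / n) (cube_index (r / n) n y)"
  define \<rho> where "\<rho> = r / n"
  have "0 < \<rho>"
    using assms by (simp add: \<rho>_def)
  have close: "\<bar>x i - y i\<bar> < \<rho>" if "i < n" for i
  proof -
    have "\<lfloor>x i / \<rho>\<rfloor> = \<lfloor>y i / \<rho>\<rfloor>"
      using x that \<open>0 < \<rho>\<close> by (auto simp: mem_cubeN_iff cube_index_def \<rho>_def)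
    then have "\<bar>x i / \<rho> - y i / \<rho>\<bar> < 1"
      by linarith
    then show ?thesis
      using \<open>0 < \<rho>\<close> by (simp add: diff_divide_distrib[symmetric] divide_less_eq)
  qed
  have "(x i - y i)\<^sup>2 < \<rho>\<^sup>2" if "i < n" for i
    using power_strict_mono[OF close[OF that], of 2] by simp
  then have "(\<Sum>i<n. (x i - y i)\<^sup>2) < (\<Sum>i<n. \<rho>\<^sup>2)"
    using assms(2) by (intro sum_strict_mono) (auto simp: lessThan_empty_iff)
  also have "\<dots> = r\<^sup>2 / n"
    using assms(2) by (simp add: \<rho>_def power2_eq_square)
  also have "\<dots> \<le> r\<^sup>2"
    using assms(2) by (simp add: divide_le_eq mult_le_cancel_left1)
  finally have "sqrt (\<Sum>i<n. (x i - y i)\<^sup>2) < r"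
    using assms(1) real_sqrt_less_mono by fastforce
  then show "x \<in> ballN n y r"
    using x \<open>0 < \<rho>\<close> by (simp add: ballN_def mem_cubeN_iff \<rho>_def)
qed

section \<open>Comparison of ball and cube norms\<close>

lemma Lmixed_indicator_cover_le:
  assumes "finite E" "S \<subseteq> (\<Union>e\<in>E. T e)" "\<And>e. e \<in> E \<Longrightarrow> T e \<in> sets (Rn n)"
    and "g \<in> borel_measurable (Rn n)" "\<forall>i<n. 1 \<le> p i"
  shows "Lmixed n p (\<lambda>x. indicator S x * g x)
    \<le> ennreal (4 ^ (card E * n)) * (\<Sum>e\<in>E. Lmixed n p (\<lambda>x. indicator (T e) x * g x))"
proof -
  have "indicator S x * g x \<le> (\<Sum>e\<in>E. indicator (T e) x * g x)" for x
  proof (cases "x \<in> S")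
    case True
    then obtain e where "e \<in> E" "x \<in> T e"
      using assms(2) by blast
    then have "indicator S x * g x = indicator (T e) x * g x"
      using True by simp
    also have "\<dots> \<le> (\<Sum>e\<in>E. indicator (T e) x * g x)"
      using \<open>e \<in> E\<close> assms(1) by (intro member_le_sum) auto
    finally show ?thesis .
  qed simp
  then have "Lmixed n p (\<lambda>x. indicator S x * g x) \<le> Lmixed n p (\<lambda>x. \<Sum>e\<in>E. indicator (T e) x * g x)"
    using assms(5) by (rule Lmixed_mono)
  also have "\<dots> \<le> ennreal (4 ^ (card E * n)) * (\<Sum>e\<in>E. Lmixed n p (\<lambda>x. indicator (T e) x * g x))"
    using assms by (intro Lmixed_sum_le) auto
  finally show ?thesis .
qed

lemma lmixed_cube_ge_Lmixed_ball:
  assumes "0 < r" "\<forall>i<n. 1 \<le> p i" "\<forall>i<n. 1 \<le> s i" "g \<in> borel_measurable (Rn n)"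
  shows "ennreal (1 / (4 ^ (2 * 3 ^ n * n) * 3 ^ n)) * ennreal (r powr - (\<Sum>i<n. enn2real (inverse (s i))))
      * Lmixed n s (\<lambda>y. Lmixed n p (\<lambda>x. indicator (ballN n y r) x * g x))
    \<le> lmixed n s (\<lambda>k. Lmixed n p (\<lambda>x. indicator (cubeN n r k) x * g x))"
proof -
  define \<sigma> where "\<sigma> = (\<Sum>i<n. enn2real (inverse (s i)))"
  define E :: "(nat \<Rightarrow> int) set" where "E = PiE {..<n} (\<lambda>_. {-1, 0, 1})"
  define K :: real where "K = 4 ^ (card E * n)"
  define C :: real where "C = K * K * card E * r powr \<sigma>"
  define a where "a = (\<lambda>k. Lmixed n p (\<lambda>x. indicator (cubeN n r k) x * g x))"
  define A where "A k = ennreal K * (\<Sum>e\<in>E. a (index_affine n 1 e k))" for k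
  define NB where "NB = Lmixed n s (\<lambda>y. Lmixed n p (\<lambda>x. indicator (ballN n y r) x * g x))"
  have E: "finite E" "card E = 3 ^ n"
    by (simp_all add: E_def card_PiE finite_PiE numeral_3_eq_3)
  have "lmixed n s A = ennreal K * lmixed n s (\<lambda>k. \<Sum>e\<in>E. a (index_affine n 1 e k))"
    unfolding A_def using assms(3) by (intro lmixed_cmult) (auto simp: K_def)
  also have "\<dots> \<le> ennreal K * (ennreal (K * card E) * lmixed n s a)"
    unfolding K_def using lmixed_sum_index_affine_le[OF E(1) _ assms(3), of 1] by (intro mult_left_mono) auto
  finally have A: "lmixed n s A \<le> ennreal K * (ennreal (K * card E) * lmixed n s a)" .
  have "NB \<le> Lmixed n s (\<lambda>y. A (cube_index r n y))"
    unfolding NB_def A_def K_def a_def E_def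
    using ballN_subset_cubes[OF assms(1)] assms
    by (intro Lmixed_mono Lmixed_indicator_cover_le) (auto simp: finite_PiE)
  also have "\<dots> = ennreal (r powr \<sigma>) * lmixed n s A"
    unfolding \<sigma>_def using assms(1,3) by (rule Lmixed_cube_index)
  also have "\<dots> \<le> ennreal (r powr \<sigma>) * (ennreal K * (ennreal (K * card E) * lmixed n s a))"
    using A by (rule mult_left_mono) simp
  also have "\<dots> = ennreal C * lmixed n s a"
    by (simp add: C_def K_def ennreal_mult mult_ac)
  finally have NB: "NB \<le> ennreal C * lmixed n s a" .
  have "ennreal (1 / (4 ^ (2 * 3 ^ n * n) * 3 ^ n)) * ennreal (r powr - \<sigma>) = ennreal (1 / C)"
    using assms(1) by (simp add: C_def K_def E ennreal_mult[symmetric] powr_minus_divide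
        power_mult power_add power_mult_distrib mult_2)
  then have "ennreal (1 / (4 ^ (2 * 3 ^ n * n) * 3 ^ n)) * ennreal (r powr - \<sigma>) * NB
      \<le> ennreal (1 / C) * (ennreal C * lmixed n s a)"
    using NB by (simp add: mult_left_mono)
  also have "\<dots> = lmixed n s a"
    using assms(1) by (intro ennreal_divide_mult_cancel) (simp add: C_def K_def E)
  finally show ?thesis
    by (simp add: a_def NB_def \<sigma>_def)
qed

lemma lmixed_cube_le_Lmixed_ball:
  assumes "0 < r" "1 \<le> n" "\<forall>i<n. 1 \<le> p i" "\<forall>i<n. 1 \<le> s i" "g \<in> borel_measurable (Rn n)"
  shows "lmixed n s (\<lambda>k. Lmixed n p (\<lambda>x. indicator (cubeN n r k) x * g x))
    \<le> ennreal (4 ^ (2 * n ^ n * n) * real n ^ n * real n powr (\<Sum>i<n. enn2real (inverse (s i))))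
      * ennreal (r powr - (\<Sum>i<n. enn2real (inverse (s i))))
      * Lmixed n s (\<lambda>y. Lmixed n p (\<lambda>x. indicator (ballN n y r) x * g x))"
proof -
  define \<sigma> where "\<sigma> = (\<Sum>i<n. enn2real (inverse (s i)))"
  define \<rho> where "\<rho> = r / n"
  define E :: "(nat \<Rightarrow> int) set" where "E = PiE {..<n} (\<lambda>_. {0..<int n})"
  define K :: real where "K = 4 ^ (card E * n)"
  define a where "a \<rho> = (\<lambda>k. Lmixed n p (\<lambda>x. indicator (cubeN n \<rho> k) x * g x))" for \<rho>
  define NB where "NB = Lmixed n s (\<lambda>y. Lmixed n p (\<lambda>x. indicator (ballN n y r) x * g x))"
  have "0 < \<rho>"
    using assms(1,2) by (simp add: \<rho>_def)
  have E: "finite E" "card E = n ^ n"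
    by (simp_all add: E_def card_PiE finite_PiE)
  have "ennreal (\<rho> powr \<sigma>) * lmixed n s (a \<rho>) = Lmixed n s (\<lambda>y. a \<rho> (cube_index \<rho> n y))"
    unfolding \<sigma>_def using \<open>0 < \<rho>\<close> assms(4) by (rule Lmixed_cube_index[symmetric])
  also have "\<dots> \<le> NB"
    unfolding NB_def a_def \<rho>_def using cubeN_cube_index_subset_ballN[OF assms(1,2)] assms(3,4)
    by (intro Lmixed_mono) (auto simp: indicator_def)
  finally have "ennreal (1 / \<rho> powr \<sigma>) * (ennreal (\<rho> powr \<sigma>) * lmixed n s (a \<rho>))
      \<le> ennreal (1 / \<rho> powr \<sigma>) * NB"
    by (rule mult_left_mono) simp
  then have "lmixed n s (a \<rho>) \<le> ennreal (1 / \<rho> powr \<sigma>) * NB"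
    using \<open>0 < \<rho>\<close> by (simp add: ennreal_divide_mult_cancel)
  moreover have "1 / \<rho> powr \<sigma> = n powr \<sigma> * r powr - \<sigma>"
    using assms(1,2) by (simp add: \<rho>_def powr_divide powr_minus_divide)
  ultimately have small_cubes: "lmixed n s (a \<rho>) \<le> ennreal (n powr \<sigma> * r powr - \<sigma>) * NB"
    by simp
  have "lmixed n s (a r) \<le> lmixed n s (\<lambda>k. ennreal K * (\<Sum>e\<in>E. a \<rho> (index_affine n n e k)))"
    unfolding K_def a_def E_def \<rho>_def using cubeN_subset_subcubes[OF assms(1,2)] assms
    by (intro lmixed_mono Lmixed_indicator_cover_le) (auto simp: finite_PiE)
  also have "\<dots> = ennreal K * lmixed n s (\<lambda>k. \<Sum>e\<in>E. a \<rho> (index_affine n n e k))"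
    using assms(4) by (intro lmixed_cmult) (auto simp: K_def)
  also have "\<dots> \<le> ennreal K * (ennreal (K * card E) * lmixed n s (a \<rho>))"
    unfolding K_def using lmixed_sum_index_affine_le[OF E(1) _ assms(4), of "int n"] assms(2)
    by (intro mult_left_mono) auto
  also have "\<dots> \<le> ennreal K * (ennreal (K * card E) * (ennreal (n powr \<sigma> * r powr - \<sigma>) * NB))"
    using small_cubes by (intro mult_left_mono) auto
  finally show ?thesis
    by (simp add: a_def NB_def \<sigma>_def K_def E power_mult power_add mult_2 ennreal_mult mult_ac)
qed

lemma L1loc_imp_measurable_norm:
  assumes "L1loc n f"
  shows "(\<lambda>x. ennreal (cmod (f x))) \<in> borel_measurable (Rn n)"
proof -
  have [measurable]: "f \<in> borel_measurable (Rn n)"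
    using assms by (simp add: L1loc_def)
  show ?thesis
    by measurable
qed

theorem lemma3p3:
  fixes n :: nat and p s :: "nat \<Rightarrow> ennreal" and \<alpha> :: ennreal
  assumes "n \<ge> 1"
    and "\<forall>i<n. 1 \<le> p i" and "\<forall>i<n. 1 \<le> s i" and "1 \<le> \<alpha>"
    and "(\<Sum>i<n. inverse (s i)) / of_nat n \<le> inverse \<alpha>"
    and "inverse \<alpha> \<le> (\<Sum>i<n. inverse (p i)) / of_nat n"
  shows "\<exists>c C :: real. 0 < c \<and> c \<le> C \<and>
    (\<forall>f r. L1loc n f \<longrightarrow> r > 0 \<longrightarrow>
      (let \<sigma> = (\<Sum>i<n. enn2real (inverse (s i)));
           NB = Lmixed n s (\<lambda>y. Lmixed n p (\<lambda>x. indicator (ballN n y r) x * ennreal (cmod (f x))));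
           NQ = lmixed n s (\<lambda>k. Lmixed n p (\<lambda>x. indicator (cubeN n r k) x * ennreal (cmod (f x))))
       in ennreal c * ennreal (r powr (- \<sigma>)) * NB \<le> NQ \<and>
          NQ \<le> ennreal C * ennreal (r powr (- \<sigma>)) * NB))"
proof -
  define \<sigma> where "\<sigma> = (\<Sum>i<n. enn2real (inverse (s i)))"
  define C\<^sub>l :: real where "C\<^sub>l = 4 ^ (2 * 3 ^ n * n) * 3 ^ n"
  define C\<^sub>u :: real where "C\<^sub>u = 4 ^ (2 * n ^ n * n) * real n ^ n * real n powr \<sigma>"
  define c where "c = min (1 / C\<^sub>l) C\<^sub>u"
  define NB where "NB f r = Lmixed n s (\<lambda>y. Lmixed n p (\<lambda>x. indicator (ballN n y r) x * ennreal (cmod (f x))))"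
    for f :: "(nat \<Rightarrow> real) \<Rightarrow> complex" and r
  define NQ where "NQ f r = lmixed n s (\<lambda>k. Lmixed n p (\<lambda>x. indicator (cubeN n r k) x * ennreal (cmod (f x))))"
    for f :: "(nat \<Rightarrow> real) \<Rightarrow> complex" and r
  have c: "0 < c" "c \<le> C\<^sub>u" "c \<le> 1 / C\<^sub>l"
    using assms(1) by (auto simp: c_def C\<^sub>l_def C\<^sub>u_def)
  have bounds: "ennreal c * ennreal (r powr - \<sigma>) * NB f r \<le> NQ f r"
    "NQ f r \<le> ennreal C\<^sub>u * ennreal (r powr - \<sigma>) * NB f r"
    if "L1loc n f" "0 < r" for f r
  proof -
    note g = L1loc_imp_measurable_norm[OF that(1)]
    have "ennreal c * ennreal (r powr - \<sigma>) * NB f r \<le> ennreal (1 / C\<^sub>l) * ennreal (r powr - \<sigma>) * NB f r"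
      using c by (intro mult_right_mono ennreal_leI) auto
    also have "\<dots> \<le> NQ f r"
      unfolding NB_def NQ_def C\<^sub>l_def \<sigma>_def using that(2) assms(2,3) g by (rule lmixed_cube_ge_Lmixed_ball)
    finally show "ennreal c * ennreal (r powr - \<sigma>) * NB f r \<le> NQ f r" .
    show "NQ f r \<le> ennreal C\<^sub>u * ennreal (r powr - \<sigma>) * NB f r"
      unfolding NB_def NQ_def C\<^sub>u_def \<sigma>_def using that(2) assms(1-3) g by (rule lmixed_cube_le_Lmixed_ball)
  qed
  show ?thesis
    by (rule exI[of _ c], rule exI[of _ C\<^sub>u]) (use c bounds in \<open>simp add: Let_def NB_def NQ_def \<sigma>_def\<close>)
qed

end
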